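(* Let $K$ be a triangle and $\mathcal B(K)=\{\mathbf v\in[P^4(K)]^2:\mathbf v=\mathbf 0\text{ on }\partial K\}$. If $\mathbf v\in\mathcal B(K)$ and $\operatorname{div}\mathbf v=0$, then $\mathbf v=\mathbf 0$.
   Context: For a triangle $K\subset\mathbb R^2$ and $k\ge0$, $P^k(K)$ denotes the set of functions which coincide with a polynomial of degree at most $k$ on $K$ and vanish outside $K$. *)

theory Defs
  imports "HOL-Analysis.Analysis"
begin

definition poly2 :: "nat \<Rightarrow> (nat \<Rightarrow> nat \<Rightarrow> real) \<Rightarrow> real \<times> real \<Rightarrow> real" where
  "poly2 k c z = (\<Sum>(i,j)\<in>{(i,j). i + j \<le> k}. c i j * fst z ^ i * snd z ^ j)"

definition is_triangle :: "(real \<times> real) set \<Rightarrow> bool" where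
  "is_triangle K \<longleftrightarrow> (\<exists>a b c. \<not> collinear {a, b, c} \<and> K = convex hull {a, b, c})"

definition Pk :: "nat \<Rightarrow> (real \<times> real) set \<Rightarrow> (real \<times> real \<Rightarrow> real) set" where
  "Pk k K = {f. \<exists>c. (\<forall>z\<in>K. f z = poly2 k c z) \<and> (\<forall>z. z \<notin> K \<longrightarrow> f z = 0)}"

definition Pk2 :: "nat \<Rightarrow> (real \<times> real) set \<Rightarrow> (real \<times> real \<Rightarrow> real \<times> real) set" where
  "Pk2 k K = {v. (\<lambda>z. fst (v z)) \<in> Pk k K \<and> (\<lambda>z. snd (v z)) \<in> Pk k K}"

definition divergence :: "(real \<times> real \<Rightarrow> real \<times> real) \<Rightarrow> real \<times> real \<Rightarrow> real" where
  "divergence v z = deriv (\<lambda>s. fst (v (s, snd z))) (fst z) + deriv (\<lambda>t. snd (v (fst z, t))) (snd z)"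

definition bubble :: "(real \<times> real) set \<Rightarrow> (real \<times> real \<Rightarrow> real \<times> real) set" where
  "bubble K = {v \<in> Pk2 4 K. \<forall>z\<in>frontier K. v z = 0}"

end

(*
  Pulling back along the affine map F of the reference triangle {(s, t). 0 \<le> s, 0 \<le> t, s + t \<le> 1}
  onto K by the contravariant Piola transform A\<^sup>-\<^sup>1 (v \<circ> F), A = DF, preserves the degree, the
  vanishing on the boundary and the vanishing of the divergence, so it suffices to treat the
  reference triangle, with a field (u1, u2) of degree 4.  Vanishing on
  the legs s = 0 and t = 0 kills all coefficients of pure powers.  Divergence-freeness, a
  polynomial identity on an open set, says (i+1) u1[i+1,j] + (j+1) u2[i,j+1] = 0; for i = 0 resp.
  j = 0 this kills the coefficients of s t^j in u1 and of s^i t in u2.  What is left is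
  u1 = s^2 t (\<alpha> + \<beta> t + \<gamma> s) and u2 = s t^2 (\<alpha>' + \<beta>' t + \<gamma>' s); vanishing at two points of the
  hypotenuse s + t = 1 and the three remaining divergence relations force all six coefficients
  to be zero.
*)
theory Submission
  imports Defs
begin

section \<open>Bivariate polynomials\<close>

lemma finite_poly2_index: "finite {(i, j). i + j \<le> (k::nat)}"
  by (rule finite_subset[of _ "{..k} \<times> {..k}"]) auto

lemma poly2_double_sum:
  "poly2 k c (x, y) = (\<Sum>i\<le>k. (\<Sum>j\<le>k. (if i + j \<le> k then c i j else 0) * y ^ j) * x ^ i)"
proof -
  have "{(i, j). i + j \<le> k} = {p \<in> {..k} \<times> {..k}. fst p + snd p \<le> k}" by auto
  then have "poly2 k c (x, y) = (\<Sum>(i, j)\<in>{..k} \<times> {..k}. if i + j \<le> k then c i j * x ^ i * y ^ j else 0)"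
    by (simp add: poly2_def sum.inter_filter case_prod_unfold)
  also have "\<dots> = (\<Sum>i\<le>k. (\<Sum>j\<le>k. (if i + j \<le> k then c i j else 0) * y ^ j) * x ^ i)"
    by (simp add: sum.cartesian_product[symmetric] sum_distrib_right)
       (auto intro!: sum.cong simp: algebra_simps)
  finally show ?thesis .
qed

lemma polyfun_coeff_eq_0_if_zero_on_infinite:
  fixes c :: "nat \<Rightarrow> real"
  assumes "infinite A" "\<And>x. x \<in> A \<Longrightarrow> (\<Sum>i\<le>n. c i * x ^ i) = 0" "i \<le> n"
  shows "c i = 0"
proof -
  have "A \<subseteq> {x. (\<Sum>i\<le>n. c i * x ^ i) = 0}"
    using assms(2) by blast
  then have "infinite {x. (\<Sum>i\<le>n. c i * x ^ i) = 0}"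
    using assms(1) infinite_super by blast
  then show ?thesis
    using polyfun_finite_roots[of c n] assms(3) by blast
qed

lemma poly2_coeff_eq_0_if_zero_on_Times:
  assumes "infinite A" "infinite B" "\<And>x y. x \<in> A \<Longrightarrow> y \<in> B \<Longrightarrow> poly2 k c (x, y) = 0"
    and "i + j \<le> k"
  shows "c i j = 0"
proof -
  let ?row = "\<lambda>y i. \<Sum>j\<le>k. (if i + j \<le> k then c i j else 0) * y ^ j"
  have "?row y i = 0" if "y \<in> B" for y
  proof (rule polyfun_coeff_eq_0_if_zero_on_infinite[where c = "?row y", OF assms(1)])
    show "(\<Sum>i\<le>k. ?row y i * x ^ i) = 0" if "x \<in> A" for x
      using assms(3)[OF that \<open>y \<in> B\<close>] by (simp only: poly2_double_sum)
    show "i \<le> k" using assms(4) by simp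
  qed
  then have "(if i + j \<le> k then c i j else 0) = 0"
    by (rule polyfun_coeff_eq_0_if_zero_on_infinite[OF assms(2)]) (use assms(4) in auto)
  then show ?thesis using assms(4) by simp
qed

lemma sum_times_zero_power: "(\<Sum>i\<le>n. f i * (0::real) ^ i) = f 0"
  by (simp add: atMost_atLeast0 sum.atLeast_Suc_atMost)

lemma poly2_x_axis: "poly2 k c (x, 0) = (\<Sum>i\<le>k. c i 0 * x ^ i)"
proof -
  have "(\<Sum>j\<le>k. (if i + j \<le> k then c i j else 0) * 0 ^ j) = c i 0" if "i \<le> k" for i
    using that by (simp add: sum_times_zero_power)
  then show ?thesis by (simp add: poly2_double_sum mult.commute)
qed

lemma poly2_y_axis: "poly2 k c (0, y) = (\<Sum>j\<le>k. c 0 j * y ^ j)"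
  by (subst poly2_double_sum, subst sum_times_zero_power) simp

lemma poly2_coeff_eq_0_if_zero_on_x_axis:
  assumes "infinite A" "\<And>x. x \<in> A \<Longrightarrow> poly2 k c (x, 0) = 0" "i \<le> k"
  shows "c i 0 = 0"
  by (rule polyfun_coeff_eq_0_if_zero_on_infinite[where c = "\<lambda>i. c i 0", OF assms(1) _ assms(3)])
     (use assms(2) in \<open>simp add: poly2_x_axis\<close>)

lemma poly2_coeff_eq_0_if_zero_on_y_axis:
  assumes "infinite B" "\<And>y. y \<in> B \<Longrightarrow> poly2 k c (0, y) = 0" "j \<le> k"
  shows "c 0 j = 0"
  by (rule polyfun_coeff_eq_0_if_zero_on_infinite[where c = "c 0", OF assms(1) _ assms(3)])
     (use assms(2) in \<open>simp add: poly2_y_axis\<close>)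

lemma poly2_eq_sum_over_support:
  assumes "S \<subseteq> {(i, j). i + j \<le> k}" "\<And>i j. i + j \<le> k \<Longrightarrow> (i, j) \<notin> S \<Longrightarrow> c i j = 0"
  shows "poly2 k c z = (\<Sum>(i, j)\<in>S. c i j * fst z ^ i * snd z ^ j)"
  unfolding poly2_def
  by (rule sum.mono_neutral_right[OF finite_poly2_index assms(1)]) (use assms(2) in auto)

definition is_poly2 :: "nat \<Rightarrow> (real \<times> real \<Rightarrow> real) \<Rightarrow> bool" where
  "is_poly2 k f \<longleftrightarrow> (\<exists>c. f = poly2 k c)"

lemma is_poly2_poly2: "is_poly2 k (poly2 k c)"
  unfolding is_poly2_def by blast

lemma poly2_add: "poly2 k c z + poly2 k d z = poly2 k (\<lambda>i j. c i j + d i j) z"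
  by (simp add: poly2_def case_prod_unfold sum.distrib[symmetric] algebra_simps)

lemma poly2_cmult: "r * poly2 k c z = poly2 k (\<lambda>i j. r * c i j) z"
  by (simp add: poly2_def case_prod_unfold sum_distrib_left mult.assoc)

lemma poly2_monomial:
  assumes "i + j \<le> k"
  shows "poly2 k (\<lambda>a b. if a = i \<and> b = j then 1 else 0) z = fst z ^ i * snd z ^ j"
proof -
  have "poly2 k (\<lambda>a b. if a = i \<and> b = j then 1 else 0) z =
      (\<Sum>p\<in>{(a, b). a + b \<le> k}. if p = (i, j) then fst z ^ i * snd z ^ j else 0)"
    unfolding poly2_def by (rule sum.cong) (auto split: prod.splits)
  then show ?thesis using assms by (simp add: finite_poly2_index)
qed

lemma is_poly2_add: "is_poly2 k f \<Longrightarrow> is_poly2 k g \<Longrightarrow> is_poly2 k (\<lambda>z. f z + g z)"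
  unfolding is_poly2_def by (auto simp: poly2_add)

lemma is_poly2_cmult: "is_poly2 k f \<Longrightarrow> is_poly2 k (\<lambda>z. r * f z)"
  unfolding is_poly2_def by (auto simp: poly2_cmult)

lemma is_poly2_diff: "is_poly2 k f \<Longrightarrow> is_poly2 k g \<Longrightarrow> is_poly2 k (\<lambda>z. f z - g z)"
  using is_poly2_add[of k f "\<lambda>z. -1 * g z"] is_poly2_cmult[of k g "-1"] by simp

lemma is_poly2_zero: "is_poly2 k (\<lambda>z. 0)"
  unfolding is_poly2_def poly2_def by (rule exI[of _ "\<lambda>i j. 0"]) simp

lemma is_poly2_sum:
  "finite S \<Longrightarrow> (\<And>x. x \<in> S \<Longrightarrow> is_poly2 k (f x)) \<Longrightarrow> is_poly2 k (\<lambda>z. \<Sum>x\<in>S. f x z)"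
  by (induction S rule: finite_induct) (auto intro: is_poly2_zero is_poly2_add)

lemma is_poly2_monomial: "i + j \<le> k \<Longrightarrow> is_poly2 k (\<lambda>z. fst z ^ i * snd z ^ j)"
  unfolding is_poly2_def fun_eq_iff by (metis poly2_monomial)

lemma poly2_as_sum_of_monomials:
  "poly2 k c = (\<lambda>z. \<Sum>p\<in>{(i, j). i + j \<le> k}. c (fst p) (snd p) * (fst z ^ fst p * snd z ^ snd p))"
  by (simp add: fun_eq_iff poly2_def case_prod_unfold mult.assoc)

lemma is_poly2_mono:
  assumes "k \<le> m" "is_poly2 k f"
  shows "is_poly2 m f"
proof -
  obtain c where f: "f = poly2 k c" using assms(2) unfolding is_poly2_def by blast
  have "is_poly2 m (\<lambda>z. fst z ^ fst p * snd z ^ snd p)" if "p \<in> {(i, j). i + j \<le> k}" for p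
    using that assms(1) by (intro is_poly2_monomial) auto
  then show ?thesis
    unfolding f poly2_as_sum_of_monomials by (intro is_poly2_sum finite_poly2_index is_poly2_cmult)
qed

lemma is_poly2_mult:
  assumes "is_poly2 k f" "is_poly2 m g"
  shows "is_poly2 (k + m) (\<lambda>z. f z * g z)"
proof -
  obtain c d where f: "f = poly2 k c" and g: "g = poly2 m d"
    using assms unfolding is_poly2_def by blast
  have monomial_mult: "(a * (x ^ i * y ^ j)) * (b * (x ^ i' * y ^ j')) = (a * b) * (x ^ (i + i') * y ^ (j + j'))"
    for a b x y :: real and i j i' j' :: nat
    by (simp add: power_add)
  show ?thesis
    unfolding f g poly2_as_sum_of_monomials sum_product monomial_mult
    by (intro is_poly2_sum is_poly2_cmult is_poly2_monomial finite_poly2_index) auto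
qed

lemma is_poly2_const: "is_poly2 k (\<lambda>z. r)"
  using is_poly2_cmult[OF is_poly2_monomial[of 0 0 k], of r] by simp

lemma is_poly2_power: "is_poly2 k f \<Longrightarrow> is_poly2 (k * n) (\<lambda>z. f z ^ n)"
  by (induction n) (auto simp: is_poly2_const dest: is_poly2_mult)

lemma is_poly2_affine: "is_poly2 1 (\<lambda>z. r + p * fst z + q * snd z)"
  using is_poly2_add[OF is_poly2_add[OF is_poly2_const is_poly2_cmult] is_poly2_cmult,
      OF is_poly2_monomial[of 1 0] is_poly2_monomial[of 0 1]]
  by simp

lemma is_poly2_compose_affine:
  assumes "is_poly2 k g" "is_poly2 1 f1" "is_poly2 1 f2"
  shows "is_poly2 k (\<lambda>z. g (f1 z, f2 z))"
proof -
  obtain c where g: "g = poly2 k c" using assms(1) unfolding is_poly2_def by blast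
  have "is_poly2 k (\<lambda>z. f1 z ^ i * f2 z ^ j)" if "i + j \<le> k" for i j
    using is_poly2_mult[OF is_poly2_power[OF assms(2)] is_poly2_power[OF assms(3)]]
    by (rule is_poly2_mono[rotated]) (use that in simp)
  then show ?thesis
    unfolding g poly2_as_sum_of_monomials
    by (auto intro!: is_poly2_sum is_poly2_cmult finite_poly2_index)
qed

section \<open>Partial derivatives\<close>

definition poly2_dx :: "(nat \<Rightarrow> nat \<Rightarrow> real) \<Rightarrow> nat \<Rightarrow> nat \<Rightarrow> real" where
  "poly2_dx c i j = real (Suc i) * c (Suc i) j"

definition poly2_dy :: "(nat \<Rightarrow> nat \<Rightarrow> real) \<Rightarrow> nat \<Rightarrow> nat \<Rightarrow> real" where
  "poly2_dy c i j = real (Suc j) * c i (Suc j)"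

lemma sum_poly2_dx:
  "(\<Sum>(i, j)\<in>{(i, j). i + j \<le> Suc m}. c i j * (real i * x ^ (i - 1)) * y ^ j) = poly2 m (poly2_dx c) (x, y)"
proof -
  let ?f = "\<lambda>(i, j). c i j * (real i * x ^ (i - 1)) * y ^ j"
  have "?f (i, j) = 0" if "i + j \<le> Suc m" "(i, j) \<notin> (\<lambda>(i, j). (Suc i, j)) ` {(i, j). i + j \<le> m}" for i j
  proof (cases i)
    case (Suc k)
    then have "(i, j) = (\<lambda>(i, j). (Suc i, j)) (k, j)" by simp
    then show ?thesis using that Suc by force
  qed simp
  then have "sum ?f {(i, j). i + j \<le> Suc m} = sum ?f ((\<lambda>(i, j). (Suc i, j)) ` {(i, j). i + j \<le> m})"
    by (intro sum.mono_neutral_right finite_poly2_index) auto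
  also have "\<dots> = poly2 m (poly2_dx c) (x, y)"
    by (subst sum.reindex) (auto simp: inj_on_def poly2_def poly2_dx_def case_prod_unfold algebra_simps)
  finally show ?thesis .
qed

lemma sum_poly2_dy:
  "(\<Sum>(i, j)\<in>{(i, j). i + j \<le> Suc m}. c i j * x ^ i * (real j * y ^ (j - 1))) = poly2 m (poly2_dy c) (x, y)"
proof -
  let ?f = "\<lambda>(i, j). c i j * x ^ i * (real j * y ^ (j - 1))"
  have "?f (i, j) = 0" if "i + j \<le> Suc m" "(i, j) \<notin> (\<lambda>(i, j). (i, Suc j)) ` {(i, j). i + j \<le> m}" for i j
  proof (cases j)
    case (Suc k)
    then have "(i, j) = (\<lambda>(i, j). (i, Suc j)) (i, k)" by simp
    then show ?thesis using that Suc by force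
  qed simp
  then have "sum ?f {(i, j). i + j \<le> Suc m} = sum ?f ((\<lambda>(i, j). (i, Suc j)) ` {(i, j). i + j \<le> m})"
    by (intro sum.mono_neutral_right finite_poly2_index) auto
  also have "\<dots> = poly2 m (poly2_dy c) (x, y)"
    by (subst sum.reindex) (auto simp: inj_on_def poly2_def poly2_dy_def case_prod_unfold algebra_simps)
  finally show ?thesis .
qed

lemma poly2_has_directional_derivative:
  "((\<lambda>s. poly2 (Suc m) c (x + s * h1, y + s * h2)) has_real_derivative
     h1 * poly2 m (poly2_dx c) (x + s * h1, y + s * h2) + h2 * poly2 m (poly2_dy c) (x + s * h1, y + s * h2)) (at s)"
proof -
  let ?x = "x + s * h1" and ?y = "y + s * h2"
  have "((\<lambda>s. poly2 (Suc m) c (x + s * h1, y + s * h2)) has_real_derivative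
     (\<Sum>(i, j)\<in>{(i, j). i + j \<le> Suc m}. c i j * ((real i * ?x ^ (i - 1) * h1) * ?y ^ j
        + ?x ^ i * (real j * ?y ^ (j - 1) * h2)))) (at s)"
    unfolding poly2_def case_prod_unfold
    by (rule DERIV_sum) (auto intro!: derivative_eq_intros simp: algebra_simps)
  moreover have "(\<Sum>(i, j)\<in>{(i, j). i + j \<le> Suc m}. c i j * ((real i * ?x ^ (i - 1) * h1) * ?y ^ j
        + ?x ^ i * (real j * ?y ^ (j - 1) * h2)))
     = h1 * poly2 m (poly2_dx c) (?x, ?y) + h2 * poly2 m (poly2_dy c) (?x, ?y)"
    unfolding sum_poly2_dx[symmetric] sum_poly2_dy[symmetric]
    by (simp add: case_prod_unfold sum_distrib_left sum.distrib[symmetric] algebra_simps)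
  ultimately show ?thesis by simp
qed

lemma poly2_has_derivative_x:
  "((\<lambda>s. poly2 (Suc m) c (s, y)) has_real_derivative poly2 m (poly2_dx c) (x, y)) (at x)"
  using poly2_has_directional_derivative[of m c 0 1 y 0 x] by simp

lemma poly2_has_derivative_y:
  "((\<lambda>t. poly2 (Suc m) c (x, t)) has_real_derivative poly2 m (poly2_dy c) (x, y)) (at y)"
  using poly2_has_directional_derivative[of m c x 0 0 1 y] by simp

lemma divergence_poly2:
  assumes "\<forall>z\<in>K. fst (v z) = poly2 (Suc m) c1 z" "\<forall>z\<in>K. snd (v z) = poly2 (Suc m) c2 z"
    and "z \<in> interior K"
  shows "divergence v z = poly2 m (poly2_dx c1) z + poly2 m (poly2_dy c2) z"
proof -
  obtain x y where z: "z = (x, y)" by (cases z)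
  have "((\<lambda>s. fst (v (s, y))) has_real_derivative poly2 m (poly2_dx c1) (x, y)) (at x)"
  proof (rule has_field_derivative_transform_within_open[OF poly2_has_derivative_x])
    show "open ((\<lambda>s. (s, y)) -` interior K)"
      by (auto intro!: continuous_open_vimage continuous_intros)
    show "poly2 (Suc m) c1 (s, y) = fst (v (s, y))" if "s \<in> (\<lambda>s. (s, y)) -` interior K" for s
      using that interior_subset[of K] assms(1) by auto
  qed (use assms(3) z in simp)
  moreover have "((\<lambda>t. snd (v (x, t))) has_real_derivative poly2 m (poly2_dy c2) (x, y)) (at y)"
  proof (rule has_field_derivative_transform_within_open[OF poly2_has_derivative_y])
    show "open ((\<lambda>t. (x, t)) -` interior K)"
      by (auto intro!: continuous_open_vimage continuous_intros)
    show "poly2 (Suc m) c2 (x, t) = snd (v (x, t))" if "t \<in> (\<lambda>t. (x, t)) -` interior K" for t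
      using that interior_subset[of K] assms(2) by auto
  qed (use assms(3) z in simp)
  ultimately show ?thesis
    unfolding divergence_def z by (simp add: DERIV_imp_deriv)
qed

section \<open>Affine images of the reference triangle\<close>

definition det2 :: "real \<times> real \<Rightarrow> real \<times> real \<Rightarrow> real" where
  "det2 d e = fst d * snd e - snd d * fst e"

definition triangle_map ::
    "real \<times> real \<Rightarrow> real \<times> real \<Rightarrow> real \<times> real \<Rightarrow> real \<times> real \<Rightarrow> real \<times> real" where
  "triangle_map a b c z = a + fst z *\<^sub>R (b - a) + snd z *\<^sub>R (c - a)"

lemma cramer_rule_2:
  assumes "det2 d e \<noteq> 0"
  shows "y = ((snd e * fst y - fst e * snd y) / det2 d e) *\<^sub>R d
           + ((fst d * snd y - snd d * fst y) / det2 d e) *\<^sub>R e"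
proof -
  have "((snd e * fst y - fst e * snd y) * fst d + (fst d * snd y - snd d * fst y) * fst e) = det2 d e * fst y"
    and "((snd e * fst y - fst e * snd y) * snd d + (fst d * snd y - snd d * fst y) * snd e) = det2 d e * snd y"
    by (simp_all add: det2_def algebra_simps)
  then show ?thesis
    using assms by (simp add: prod_eq_iff add_divide_distrib[symmetric])
qed

lemma scaleR_combination_eq_0_if_det2_neq_0:
  assumes "det2 d e \<noteq> 0" "x *\<^sub>R d + y *\<^sub>R e = 0"
  shows "x = 0 \<and> y = 0"
proof -
  have fst: "x * fst d + y * fst e = 0" and snd: "x * snd d + y * snd e = 0"
    using assms(2) by (simp_all add: prod_eq_iff)
  have "x * det2 d e = snd e * (x * fst d + y * fst e) - fst e * (x * snd d + y * snd e)"
    and "y * det2 d e = fst d * (x * snd d + y * snd e) - snd d * (x * fst d + y * fst e)"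
    by (simp_all add: det2_def algebra_simps)
  then have "x * det2 d e = 0" "y * det2 d e = 0"
    unfolding fst snd by simp_all
  then show ?thesis using assms(1) by simp
qed

lemma collinear_if_det2_eq_0:
  assumes "det2 d e = 0"
  shows "collinear {0, d, e}"
proof (cases "d = 0")
  case False
  then consider "fst d \<noteq> 0" | "snd d \<noteq> 0" by (auto simp: prod_eq_iff)
  then have "e = (if fst d \<noteq> 0 then fst e / fst d else snd e / snd d) *\<^sub>R d"
    using assms by cases (auto simp: det2_def prod_eq_iff field_simps)
  then show ?thesis unfolding collinear_lemma by blast
qed (simp add: collinear_lemma)

lemma det2_neq_0_if_not_collinear:
  assumes "\<not> collinear {a, b, c}"
  shows "det2 (b - a) (c - a) \<noteq> 0"
proof
  assume "det2 (b - a) (c - a) = 0"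
  then have "collinear {b, a, c}"
    using collinear_3[of b a c] collinear_if_det2_eq_0 by simp
  then show False using assms by (simp add: insert_commute)
qed

lemma triangle_map_in_convex_hull:
  "z \<in> convex hull {a, b, c} \<longleftrightarrow> (\<exists>s t. 0 \<le> s \<and> 0 \<le> t \<and> s + t \<le> 1 \<and> z = triangle_map a b c (s, t))"
  by (auto simp: convex_hull_3_alt triangle_map_def)

lemma triangle_map_in_interior:
  assumes "\<not> collinear {a, b, c}" "0 < s" "0 < t" "s + t < 1"
  shows "triangle_map a b c (s, t) \<in> interior (convex hull {a, b, c})"
proof -
  have dim: "DIM(real \<times> real) = 2" by simp
  show ?thesis
    unfolding interior_convex_hull_3_minimal[OF assms(1) dim] mem_Collect_eq
    by (intro exI[of _ "1 - s - t"] exI[of _ s] exI[of _ t])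
       (use assms in \<open>auto simp: triangle_map_def algebra_simps\<close>)
qed

lemma triangle_map_in_frontier:
  assumes "0 \<le> s" "0 \<le> t" "s + t \<le> 1" "s = 0 \<or> t = 0 \<or> s + t = 1"
  shows "triangle_map a b c (s, t) \<in> frontier (convex hull {a, b, c})"
proof -
  have "triangle_map a b c (s, t) \<in> closed_segment c a \<union> closed_segment a b \<union> closed_segment b c"
    using assms(4)
  proof (elim disjE)
    assume "s = 0"
    then have "triangle_map a b c (s, t) = (1 - (1 - t)) *\<^sub>R c + (1 - t) *\<^sub>R a"
      by (simp add: triangle_map_def algebra_simps)
    moreover have "0 \<le> 1 - t" "1 - t \<le> 1" using assms \<open>s = 0\<close> by auto
    ultimately show ?thesis unfolding closed_segment_def by blast
  next
    assume "t = 0"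
    then have "triangle_map a b c (s, t) = (1 - s) *\<^sub>R a + s *\<^sub>R b"
      by (simp add: triangle_map_def algebra_simps)
    moreover have "0 \<le> s" "s \<le> 1" using assms \<open>t = 0\<close> by auto
    ultimately show ?thesis unfolding closed_segment_def by blast
  next
    assume "s + t = 1"
    then have "s *\<^sub>R x + t *\<^sub>R x = x" for x :: "real \<times> real"
      by (metis scaleR_add_left scaleR_one)
    then have "triangle_map a b c (s, t) = (1 - t) *\<^sub>R b + t *\<^sub>R c"
      by (simp add: triangle_map_def algebra_simps)
    moreover have "0 \<le> t" "t \<le> 1" using assms \<open>s + t = 1\<close> by auto
    ultimately show ?thesis unfolding closed_segment_def by blast
  qed
  then show ?thesis by (simp add: frontier_of_triangle Un_ac)
qed

lemma is_poly2_compose_triangle_map: "is_poly2 k (\<lambda>z. poly2 k c1 (triangle_map a b c z))"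
proof -
  have "is_poly2 k (\<lambda>z. poly2 k c1 (fst a + fst (b - a) * fst z + fst (c - a) * snd z,
                                     snd a + snd (b - a) * fst z + snd (c - a) * snd z))"
    by (intro is_poly2_compose_affine is_poly2_poly2 is_poly2_affine)
  moreover have "triangle_map a b c z = (fst a + fst (b - a) * fst z + fst (c - a) * snd z,
                                          snd a + snd (b - a) * fst z + snd (c - a) * snd z)" for z
    by (simp add: triangle_map_def prod_eq_iff algebra_simps)
  ultimately show ?thesis by simp
qed

lemma poly2_triangle_map_has_derivative_s:
  "((\<lambda>s. poly2 (Suc m) c1 (triangle_map a b c (s, t))) has_real_derivative
     fst (b - a) * poly2 m (poly2_dx c1) (triangle_map a b c (s, t))
     + snd (b - a) * poly2 m (poly2_dy c1) (triangle_map a b c (s, t))) (at s)"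
proof -
  have "triangle_map a b c (s, t) = (fst a + t * fst (c - a) + s * fst (b - a), snd a + t * snd (c - a) + s * snd (b - a))"
    for s by (simp add: triangle_map_def prod_eq_iff algebra_simps)
  then show ?thesis by (simp only: poly2_has_directional_derivative)
qed

lemma poly2_triangle_map_has_derivative_t:
  "((\<lambda>t. poly2 (Suc m) c1 (triangle_map a b c (s, t))) has_real_derivative
     fst (c - a) * poly2 m (poly2_dx c1) (triangle_map a b c (s, t))
     + snd (c - a) * poly2 m (poly2_dy c1) (triangle_map a b c (s, t))) (at t)"
proof -
  have "triangle_map a b c (s, t) = (fst a + s * fst (b - a) + t * fst (c - a), snd a + s * snd (b - a) + t * snd (c - a))"
    for t by (simp add: triangle_map_def prod_eq_iff algebra_simps)
  then show ?thesis by (simp only: poly2_has_directional_derivative)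
qed

(* (u1, u2) = A\<^sup>-\<^sup>1 (V \<circ> F), where A = [b - a, c - a] is the Jacobian of F = triangle_map a b c;
   its divergence tr (A\<^sup>-\<^sup>1 (DV \<circ> F) A) equals (div V) \<circ> F. *)
lemma poly2_piola_pullback:
  assumes D: "det2 (b - a) (c - a) \<noteq> 0"
  obtains u1 u2 where
    "\<And>z. (poly2 (Suc m) c1 (triangle_map a b c z), poly2 (Suc m) c2 (triangle_map a b c z))
        = poly2 (Suc m) u1 z *\<^sub>R (b - a) + poly2 (Suc m) u2 z *\<^sub>R (c - a)"
    "\<And>z. poly2 m (poly2_dx u1) z + poly2 m (poly2_dy u2) z
        = poly2 m (poly2_dx c1) (triangle_map a b c z) + poly2 m (poly2_dy c2) (triangle_map a b c z)"
proof -
  define p q r w where "p = fst (b - a)" "q = snd (b - a)" "r = fst (c - a)" "w = snd (c - a)"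
  have D': "det2 (b - a) (c - a) = p * w - q * r" by (simp add: det2_def p_q_r_w_def)
  define P1 P2 where "P1 = (\<lambda>z. poly2 (Suc m) c1 (triangle_map a b c z))"
    and "P2 = (\<lambda>z. poly2 (Suc m) c2 (triangle_map a b c z))"
  define U1 U2 where "U1 = (\<lambda>z. (w * P1 z - r * P2 z) / (p * w - q * r))"
    and "U2 = (\<lambda>z. (p * P2 z - q * P1 z) / (p * w - q * r))"
  have "is_poly2 (Suc m) U1" "is_poly2 (Suc m) U2"
    unfolding U1_def U2_def P1_def P2_def diff_divide_distrib times_divide_eq_left[symmetric]
    by (intro is_poly2_diff is_poly2_cmult is_poly2_compose_triangle_map)+
  then obtain u1 u2 where u1: "U1 = poly2 (Suc m) u1" and u2: "U2 = poly2 (Suc m) u2"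
    unfolding is_poly2_def by blast
  show ?thesis
  proof
    show "(poly2 (Suc m) c1 (triangle_map a b c z), poly2 (Suc m) c2 (triangle_map a b c z))
        = poly2 (Suc m) u1 z *\<^sub>R (b - a) + poly2 (Suc m) u2 z *\<^sub>R (c - a)" for z
      using cramer_rule_2[OF D, of "(P1 z, P2 z)"]
      by (simp add: u1[symmetric] u2[symmetric] U1_def U2_def P1_def P2_def D' p_q_r_w_def)
  next
    fix z :: "real \<times> real"
    obtain s t where z: "z = (s, t)" by (cases z)
    let ?dx1 = "poly2 m (poly2_dx c1) (triangle_map a b c z)"
    let ?dy1 = "poly2 m (poly2_dy c1) (triangle_map a b c z)"
    let ?dx2 = "poly2 m (poly2_dx c2) (triangle_map a b c z)"
    let ?dy2 = "poly2 m (poly2_dy c2) (triangle_map a b c z)"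
    have "((\<lambda>s. U1 (s, t)) has_real_derivative
        (w * (p * ?dx1 + q * ?dy1) - r * (p * ?dx2 + q * ?dy2)) / (p * w - q * r)) (at s)"
      unfolding U1_def P1_def P2_def z p_q_r_w_def
      by (intro DERIV_cdivide DERIV_diff DERIV_cmult poly2_triangle_map_has_derivative_s)
    then have dx: "poly2 m (poly2_dx u1) z
        = (w * (p * ?dx1 + q * ?dy1) - r * (p * ?dx2 + q * ?dy2)) / (p * w - q * r)"
      using DERIV_unique poly2_has_derivative_x unfolding u1 z by blast
    have "((\<lambda>t. U2 (s, t)) has_real_derivative
        (p * (r * ?dx2 + w * ?dy2) - q * (r * ?dx1 + w * ?dy1)) / (p * w - q * r)) (at t)"
      unfolding U2_def P1_def P2_def z p_q_r_w_def
      by (intro DERIV_cdivide DERIV_diff DERIV_cmult poly2_triangle_map_has_derivative_t)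
    then have dy: "poly2 m (poly2_dy u2) z
        = (p * (r * ?dx2 + w * ?dy2) - q * (r * ?dx1 + w * ?dy1)) / (p * w - q * r)"
      using DERIV_unique poly2_has_derivative_y unfolding u2 z by blast
    have "(w * (p * ?dx1 + q * ?dy1) - r * (p * ?dx2 + q * ?dy2))
          + (p * (r * ?dx2 + w * ?dy2) - q * (r * ?dx1 + w * ?dy1))
        = (p * w - q * r) * (?dx1 + ?dy2)"
      by (simp add: algebra_simps)
    then show "poly2 m (poly2_dx u1) z + poly2 m (poly2_dy u2) z = ?dx1 + ?dy2"
      unfolding dx dy add_divide_distrib[symmetric] using D D' by simp
  qed
qed

section \<open>Divergence-free bubbles of degree 4\<close>

lemma poly2_div_coeffs_eq_0:
  assumes "infinite A" "infinite B"
    and "\<And>x y. x \<in> A \<Longrightarrow> y \<in> B \<Longrightarrow> poly2 m (poly2_dx u1) (x, y) + poly2 m (poly2_dy u2) (x, y) = 0"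
    and "i + j \<le> m"
  shows "real (Suc i) * u1 (Suc i) j + real (Suc j) * u2 i (Suc j) = 0"
proof -
  have "(\<lambda>i j. poly2_dx u1 i j + poly2_dy u2 i j) i j = 0"
    by (rule poly2_coeff_eq_0_if_zero_on_Times[OF assms(1,2) _ assms(4)])
       (use assms(3) in \<open>simp add: poly2_add\<close>)
  then show ?thesis by (simp add: poly2_dx_def poly2_dy_def)
qed

lemma div_free_bubble_coeffs_sparse:
  fixes u1 u2 :: "nat \<Rightarrow> nat \<Rightarrow> real"
  assumes x_edge: "\<And>i. i \<le> 4 \<Longrightarrow> u1 i 0 = 0 \<and> u2 i 0 = 0"
    and y_edge: "\<And>j. j \<le> 4 \<Longrightarrow> u1 0 j = 0 \<and> u2 0 j = 0"
    and div_coeffs: "\<And>i j. i + j \<le> 3 \<Longrightarrow> real (Suc i) * u1 (Suc i) j + real (Suc j) * u2 i (Suc j) = 0"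
    and "i + j \<le> 4"
  shows "(i, j) \<notin> {(2, 1), (2, 2), (3, 1)} \<Longrightarrow> u1 i j = 0"
    and "(i, j) \<notin> {(1, 2), (1, 3), (2, 2)} \<Longrightarrow> u2 i j = 0"
proof -
  have edges: "u1 i 0 = 0" "u2 i 0 = 0" "u1 0 j = 0" "u2 0 j = 0"
    using x_edge[of i] y_edge[of j] assms(4) by auto
  have "u1 1 j = 0" if "j \<le> 3" for j
    using div_coeffs[of 0 j] y_edge[of "Suc j"] that by simp
  moreover have "i = 0 \<or> j = 0 \<or> (i = 1 \<and> j \<le> 3) \<or> (i = 2 \<and> j = 1) \<or> (i = 2 \<and> j = 2) \<or> (i = 3 \<and> j = 1)"
    using assms(4) by presburger
  ultimately show "u1 i j = 0" if "(i, j) \<notin> {(2, 1), (2, 2), (3, 1)}"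
    using that edges by auto
  have "u2 i 1 = 0" if "i \<le> 3" for i
    using div_coeffs[of i 0] x_edge[of "Suc i"] that by simp
  moreover have "i = 0 \<or> j = 0 \<or> (j = 1 \<and> i \<le> 3) \<or> (i = 1 \<and> j = 2) \<or> (i = 1 \<and> j = 3) \<or> (i = 2 \<and> j = 2)"
    using assms(4) by presburger
  ultimately show "u2 i j = 0" if "(i, j) \<notin> {(1, 2), (1, 3), (2, 2)}"
    using that edges by auto
qed

lemma reference_triangle_div_free_bubble_eq_0:
  fixes u1 u2 :: "nat \<Rightarrow> nat \<Rightarrow> real"
  assumes boundary: "\<And>s t. 0 \<le> s \<Longrightarrow> 0 \<le> t \<Longrightarrow> s + t \<le> 1 \<Longrightarrow> s = 0 \<or> t = 0 \<or> s + t = 1 \<Longrightarrow>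
        poly2 4 u1 (s, t) = 0 \<and> poly2 4 u2 (s, t) = 0"
    and div_free: "\<And>s t. 0 < s \<Longrightarrow> 0 < t \<Longrightarrow> s + t < 1 \<Longrightarrow>
        poly2 3 (poly2_dx u1) (s, t) + poly2 3 (poly2_dy u2) (s, t) = 0"
  shows "poly2 4 u1 z = 0 \<and> poly2 4 u2 z = 0"
proof -
  have x_edge: "u1 i 0 = 0 \<and> u2 i 0 = 0" if "i \<le> 4" for i
    using poly2_coeff_eq_0_if_zero_on_x_axis[of "{0..1}" 4 _ i] boundary that by simp
  have y_edge: "u1 0 j = 0 \<and> u2 0 j = 0" if "j \<le> 4" for j
    using poly2_coeff_eq_0_if_zero_on_y_axis[of "{0..1}" 4 _ j] boundary that by simp
  have div_coeffs: "real (Suc i) * u1 (Suc i) j + real (Suc j) * u2 i (Suc j) = 0" if "i + j \<le> 3" for i j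
    by (rule poly2_div_coeffs_eq_0[of "{0<..<1/2}" "{0<..<1/2}"]) (use div_free that in auto)
  note support = div_free_bubble_coeffs_sparse[of u1 u2, OF x_edge y_edge div_coeffs]
  have u1: "poly2 4 u1 z = u1 2 1 * fst z ^ 2 * snd z + u1 2 2 * fst z ^ 2 * snd z ^ 2 + u1 3 1 * fst z ^ 3 * snd z"
    for z by (subst poly2_eq_sum_over_support[where S = "{(2, 1), (2, 2), (3, 1)}", OF _ support(1)]) simp_all
  have u2: "poly2 4 u2 z = u2 1 2 * fst z * snd z ^ 2 + u2 1 3 * fst z * snd z ^ 3 + u2 2 2 * fst z ^ 2 * snd z ^ 2"
    for z by (subst poly2_eq_sum_over_support[where S = "{(1, 2), (1, 3), (2, 2)}", OF _ support(2)]) simp_all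
  have "u1 2 1 = 0 \<and> u1 2 2 = 0 \<and> u1 3 1 = 0 \<and> u2 1 2 = 0 \<and> u2 1 3 = 0 \<and> u2 2 2 = 0"
    using boundary[of "1/2" "1/2", unfolded u1 u2] boundary[of "1/4" "3/4", unfolded u1 u2]
      div_coeffs[of 1 1] div_coeffs[of 1 2] div_coeffs[of 2 1]
    by (simp add: power2_eq_square power3_eq_cube eval_nat_numeral)
  then have "u1 i j = 0 \<and> u2 i j = 0" if "i + j \<le> 4" for i j
    using support that by blast
  then show ?thesis
    using poly2_eq_sum_over_support[of "{}" 4] by simp
qed

lemma triangle_div_free_bubble_eq_0:
  assumes "\<not> collinear {a, b, c}"
    and boundary: "\<And>z. z \<in> frontier (convex hull {a, b, c}) \<Longrightarrow> poly2 4 c1 z = 0 \<and> poly2 4 c2 z = 0"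
    and div_free: "\<And>z. z \<in> interior (convex hull {a, b, c}) \<Longrightarrow>
        poly2 3 (poly2_dx c1) z + poly2 3 (poly2_dy c2) z = 0"
    and "z \<in> convex hull {a, b, c}"
  shows "poly2 4 c1 z = 0 \<and> poly2 4 c2 z = 0"
proof -
  have D: "det2 (b - a) (c - a) \<noteq> 0"
    using assms(1) by (rule det2_neq_0_if_not_collinear)
  obtain u1 u2 where pullback: "\<And>z. (poly2 4 c1 (triangle_map a b c z), poly2 4 c2 (triangle_map a b c z))
        = poly2 4 u1 z *\<^sub>R (b - a) + poly2 4 u2 z *\<^sub>R (c - a)"
    and div_pullback: "\<And>z. poly2 3 (poly2_dx u1) z + poly2 3 (poly2_dy u2) z
        = poly2 3 (poly2_dx c1) (triangle_map a b c z) + poly2 3 (poly2_dy c2) (triangle_map a b c z)"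
    using poly2_piola_pullback[OF D, of 3 c1 c2] by (auto simp: numeral_eq_Suc)
  have "poly2 4 u1 z = 0 \<and> poly2 4 u2 z = 0" for z
  proof (rule reference_triangle_div_free_bubble_eq_0)
    fix s t :: real
    assume "0 \<le> s" "0 \<le> t" "s + t \<le> 1" "s = 0 \<or> t = 0 \<or> s + t = 1"
    then have "poly2 4 u1 (s, t) *\<^sub>R (b - a) + poly2 4 u2 (s, t) *\<^sub>R (c - a) = 0"
      using boundary[OF triangle_map_in_frontier] pullback[of "(s, t)"] by (simp add: zero_prod_def)
    then show "poly2 4 u1 (s, t) = 0 \<and> poly2 4 u2 (s, t) = 0"
      using D by (rule scaleR_combination_eq_0_if_det2_neq_0[rotated])
  next
    fix s t :: real
    assume "0 < s" "0 < t" "s + t < 1"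
    then show "poly2 3 (poly2_dx u1) (s, t) + poly2 3 (poly2_dy u2) (s, t) = 0"
      using div_free[OF triangle_map_in_interior[OF assms(1)]] div_pullback by simp
  qed
  moreover obtain s t where "z = triangle_map a b c (s, t)"
    using assms(4) triangle_map_in_convex_hull by blast
  ultimately show ?thesis using pullback[of "(s, t)"] by (simp add: zero_prod_def)
qed

theorem lemma3p1:
  fixes K :: "(real \<times> real) set" and v :: "real \<times> real \<Rightarrow> real \<times> real"
  assumes "is_triangle K"
    and "v \<in> bubble K"
    and "\<forall>z\<in>interior K. divergence v z = 0"
  shows "v = (\<lambda>z. 0)"
proof
  fix z
  obtain a b c where nc: "\<not> collinear {a, b, c}" and K: "K = convex hull {a, b, c}"
    using assms(1) unfolding is_triangle_def by blast
  obtain c1 c2 where c1: "\<forall>z\<in>K. fst (v z) = poly2 4 c1 z" and c2: "\<forall>z\<in>K. snd (v z) = poly2 4 c2 z"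
    and outside: "\<forall>z. z \<notin> K \<longrightarrow> v z = 0"
    using assms(2) unfolding bubble_def Pk2_def Pk_def by (auto simp: prod_eq_iff)
  have "frontier K \<subseteq> K"
    unfolding K by (simp add: frontier_subset_closed compact_imp_closed finite_imp_compact_convex_hull)
  then have "poly2 4 c1 z = 0 \<and> poly2 4 c2 z = 0" if "z \<in> frontier K" for z
  proof -
    have "z \<in> K" "v z = 0"
      using that \<open>frontier K \<subseteq> K\<close> assms(2) unfolding bubble_def by auto
    then show ?thesis using c1 c2 by force
  qed
  moreover have "poly2 3 (poly2_dx c1) z + poly2 3 (poly2_dy c2) z = 0" if "z \<in> interior K" for z
    using divergence_poly2[of K v 3 c1 c2] c1 c2 assms(3) that by simp
  ultimately have "poly2 4 c1 z = 0 \<and> poly2 4 c2 z = 0" if "z \<in> K" for z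
    using triangle_div_free_bubble_eq_0[OF nc] that unfolding K by blast
  then show "v z = 0"
    using c1 c2 outside by (cases "z \<in> K") (simp add: prod_eq_iff, blast)
qed

end
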